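(* Let $i\geq 1$, $\omega_i=e^{2\pi i/5^i}$, and $f\in\mathbb Z[x]$ with $5\nmid N_i(f)$. (i) There exist a unit $u(\omega_i)$ of $\mathbb Z[\omega_i]$ and $h\in\mathbb Z[x]$ with $u(\omega_i)f(\omega_i)=1+(\omega_i-1)^3h(\omega_i)$; moreover one can take $u(x)=\pm x^I(1+x)^J(x^4+x)^{2K}$ with $J\in\{0,1\}$ and $0\leq I,K\leq 4$. (ii) There do not exist units $u_1(\omega_i),u_2(\omega_i)$ of $\mathbb Z[\omega_i]$ and $h_1,h_2\in\mathbb Z[x]$ with $u_1(\omega_i)f(\omega_i)=1+(\omega_i-1)^3h_1(\omega_i)$, $u_2(\omega_i)f(\omega_i)=1+(\omega_i-1)^3h_2(\omega_i)$, $5\mid h_1(1)$ and $5\nmid h_2(1)$.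
   Context: $N_i(f)=\prod_{1\leq j\leq 5^i,\ 5\nmid j}f(\omega_i^j)$. *)

theory Defs
  imports Complex_Main "HOL-Computational_Algebra.Polynomial"
begin

definition omega :: "nat \<Rightarrow> complex" where
  "omega i = exp (2 * of_real pi * \<i> / of_nat (5 ^ i))"

definition ev :: "int poly \<Rightarrow> complex \<Rightarrow> complex" where
  "ev p z = poly (map_poly of_int p) z"

definition Nnorm :: "nat \<Rightarrow> int poly \<Rightarrow> complex" where
  "Nnorm i f = (\<Prod>j\<in>{j. 1 \<le> j \<and> j \<le> 5 ^ i \<and> \<not> (5::nat) dvd j}. ev f (omega i ^ j))"

definition Zomega :: "nat \<Rightarrow> complex set" where
  "Zomega i = {ev p (omega i) | p. True}"

definition Zomega_unit :: "nat \<Rightarrow> complex \<Rightarrow> bool" where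
  "Zomega_unit i u \<longleftrightarrow> u \<in> Zomega i \<and> (\<exists>v\<in>Zomega i. u * v = 1)"

end

(* Write lambda = omega - 1.  After the shift X -> X + 1 the 5^i-th cyclotomic polynomial is
   Eisenstein at 5, so it is the minimal polynomial of omega, 5 is a unit times a power of lambda,
   and identities at omega reduce to congruences between the low coefficients of polynomials in
   X - 1 modulo 5.  Reduced in this way the norm satisfies N_i(f) = f(1)^phi mod 5, so f(1) is
   prime to 5, and the units -1, 1 + omega, omega and (omega^4 + omega)^2 adjust the coefficients
   of lambda^0, lambda^1 and lambda^2 in f(omega) one after the other; this gives (i).  For (ii),
   the quotient U of two such units is congruent to 1 modulo lambda^3.  Then U divided by its
   complex conjugate has all conjugates on the unit circle, hence is a root of unity by
   Kronecker's argument; raised to the prime-to-5 part of its order it becomes a power of omega,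
   which forces U = 1 mod lambda^4, and comparing the coefficients of lambda^3 gives
   h1(1) = h2(1) mod 5. *)

theory Submission
  imports Defs "HOL-Analysis.Complex_Transcendental" "HOL-Number_Theory.Totient"
begin

section \<open>Evaluation at powers of omega\<close>

lemma ev_pCons [simp]: "ev (pCons a p) z = of_int a + z * ev p z"
  by (simp add: ev_def map_poly_pCons)

lemma ev_0 [simp]: "ev 0 z = 0"
  by (simp add: ev_def)

lemma ev_1 [simp]: "ev 1 z = 1"
  by (simp add: one_pCons)

lemma ev_add [simp]: "ev (p + q) z = ev p z + ev q z"
  by (induction p q rule: poly_induct2) (simp_all add: algebra_simps)

lemma ev_smult [simp]: "ev (smult a p) z = of_int a * ev p z"
  by (induction p) (simp_all add: algebra_simps)

lemma ev_mult [simp]: "ev (p * q) z = ev p z * ev q z"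
  by (induction p) (simp_all add: algebra_simps)

lemma ev_minus [simp]: "ev (- p) z = - ev p z"
  by (induction p) (simp_all add: algebra_simps)

lemma ev_diff [simp]: "ev (p - q) z = ev p z - ev q z"
  using ev_add[of p "- q" z] by simp

lemma ev_power [simp]: "ev (p ^ k) z = ev p z ^ k"
  by (induction k) simp_all

lemma ev_prod: "ev (\<Prod>x\<in>A. f x) z = (\<Prod>x\<in>A. ev (f x) z)"
  by (induction A rule: infinite_finite_induct) simp_all

lemma ev_sum: "ev (\<Sum>x\<in>A. f x) z = (\<Sum>x\<in>A. ev (f x) z)"
  by (induction A rule: infinite_finite_induct) simp_all

lemma ev_pcompose [simp]: "ev (pcompose p q) z = ev p (ev q z)"
  by (induction p) (simp_all add: pcompose_pCons)

lemma ev_monom [simp]: "ev (monom c k) z = of_int c * z ^ k"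
  by (simp add: ev_def poly_monom map_poly_monom)

lemma ev_cnj: "cnj (ev p z) = ev p (cnj z)"
  by (induction p) simp_all

lemma ev_altdef: "ev p z = (\<Sum>d\<le>degree p. of_int (coeff p d) * z ^ d)"
  unfolding ev_def poly_altdef by (simp add: degree_map_poly coeff_map_poly)

lemma five_pow_eq: "i \<ge> 1 \<Longrightarrow> (5::nat) ^ i = 5 * 5 ^ (i - 1)"
  by (simp add: power_eq_if)

lemma omega_pow: "omega i ^ j = exp (2 * complex_of_real pi * \<i> * of_nat j / of_nat (5 ^ i))"
  unfolding omega_def exp_of_nat_mult[symmetric] by (simp add: algebra_simps)

lemma omega_pow_eq_1_iff: "omega i ^ j = 1 \<longleftrightarrow> 5 ^ i dvd j"
  unfolding omega_pow by (rule complex_root_unity_eq_1) simp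

lemma omega_pow_5pow [simp]: "omega i ^ (5 ^ i) = 1"
  by (simp add: omega_pow_eq_1_iff)

lemma norm_omega [simp]: "norm (omega i) = 1"
  by (simp add: omega_def norm_exp_eq_Re)

lemma omega_pow_mod: "omega i ^ (j mod 5 ^ i) = omega i ^ j"
  by (metis div_mult_mod_eq mult.commute omega_pow_5pow power_add power_mult power_one mult_1)

lemma omega_pow_mult_5pow_pred_neq_1:
  assumes "i \<ge> 1" "\<not> 5 dvd k"
  shows "omega i ^ (k * 5 ^ (i - 1)) \<noteq> 1"
  using assms by (simp add: omega_pow_eq_1_iff five_pow_eq)

lemma cnj_omega_pow: "cnj (omega i ^ j) = omega i ^ ((5 ^ i - 1) * j)"
proof -
  have "omega i ^ j * omega i ^ ((5 ^ i - 1) * j) = 1"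
    by (simp add: power_add[symmetric] algebra_simps omega_pow_eq_1_iff)
  moreover have "omega i ^ j * cnj (omega i ^ j) = 1"
    by (metis complex_norm_square norm_omega norm_power of_real_1 power_one)
  ultimately show ?thesis
    by (metis mult.left_commute mult.right_neutral mult_1)
qed

lemma root_of_unity_eq_omega_pow:
  assumes "z ^ (5 ^ i) = 1"
  obtains k where "z = omega i ^ k"
proof -
  have "z \<in> {z. z ^ (5 ^ i) = 1}" using assms by simp
  also have "\<dots> = {exp (2 * complex_of_real pi * \<i> * of_nat k / of_nat (5 ^ i)) | k. k < 5 ^ i}"
    by (rule complex_roots_unity) simp
  finally show ?thesis using that unfolding omega_pow by blast
qed

section \<open>Congruences modulo (5, (X - 1)^k)\<close>

lemma pcompose_power_left: "pcompose (p ^ k) r = pcompose p r ^ k"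
  by (induction k) (simp_all add: pcompose_mult pcompose_1)

lemma coeff_mult_1: "coeff (A * B) 1 = coeff A 0 * coeff B 1 + coeff A 1 * coeff B 0"
  for A B :: "'a::comm_semiring_1 poly"
  by (simp add: coeff_mult)

lemma coeff_mult_2:
  "coeff (A * B) 2 = coeff A 0 * coeff B 2 + coeff A 1 * coeff B 1 + coeff A 2 * coeff B 0"
  for A B :: "'a::comm_semiring_1 poly"
  by (simp add: coeff_mult numeral_2_eq_2)

lemma coeff_power_1: "coeff (P ^ Suc n) 1 = of_nat (Suc n) * coeff P 0 ^ n * coeff P 1"
  for P :: "'a::comm_semiring_1 poly"
proof (induction n)
  case (Suc n)
  have "coeff (P ^ Suc (Suc n)) 1 = coeff P 0 * coeff (P ^ Suc n) 1 + coeff P 1 * coeff (P ^ Suc n) 0"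
    by (simp only: power_Suc[of P "Suc n"] coeff_mult_1)
  also have "\<dots> = of_nat (Suc (Suc n)) * coeff P 0 ^ Suc n * coeff P 1"
    by (simp only: Suc.IH coeff_0_power) (simp add: algebra_simps)
  finally show ?case .
qed simp

lemma coeff_linear_power_1: "coeff ([:1, 1::int:] ^ n) (Suc 0) = int n"
  by (induction n) (simp_all add: coeff_mult_1 coeff_0_power)

lemma dvd_power_diff: "d dvd a - b \<Longrightarrow> d dvd a ^ n - b ^ n" for a b d :: "'a::comm_ring_1"
  by (simp add: power_diff_sumr2 dvd_mult2)

lemma const_poly_dvd_one_plus_power_prime:
  fixes y :: "int poly"
  assumes p: "prime p"
  shows "[:int p:] dvd (1 + y) ^ p - (1 + y ^ p)"
proof -
  have "0 < p" using p by (simp add: prime_gt_0_nat)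
  then have split: "{..p} = insert 0 (insert p {1..<p})" by auto
  have "(1 + y) ^ p = (\<Sum>k\<le>p. of_nat (p choose k) * y ^ k)"
    using binomial_ring[of y 1 p] by (simp add: add.commute)
  also have "\<dots> = 1 + y ^ p + (\<Sum>k\<in>{1..<p}. smult (int (p choose k)) (y ^ k))"
    unfolding split using \<open>0 < p\<close> by (simp add: of_nat_poly)
  finally have eq: "(1 + y) ^ p - (1 + y ^ p) = (\<Sum>k\<in>{1..<p}. smult (int (p choose k)) (y ^ k))"
    by simp
  have "[:int p:] dvd smult (int (p choose k)) (y ^ k)" if "k \<in> {1..<p}" for k
  proof -
    have "p dvd p choose k" using that p by (simp add: dvd_choose_prime)
    then show ?thesis by (simp add: const_poly_dvd_iff dvd_mult2)
  qed
  then show ?thesis unfolding eq by (rule dvd_sum)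
qed

lemma const_poly_dvd_frobenius:
  assumes "prime p"
  shows "[:int p:] dvd [:1, 1:] ^ (p ^ a) - (1 + monom 1 (p ^ a))"
proof (induction a)
  case 0
  show ?case by (simp add: monom_altdef one_pCons)
next
  case (Suc a)
  have "[:int p:] dvd ([:1, 1:] ^ p ^ a) ^ p - (1 + monom 1 (p ^ a)) ^ p"
    using Suc by (rule dvd_power_diff)
  moreover have "[:int p:] dvd (1 + monom 1 (p ^ a)) ^ p - (1 + monom 1 (p ^ a) ^ p)"
    using assms by (rule const_poly_dvd_one_plus_power_prime)
  ultimately have "[:int p:] dvd ([:1, 1:] ^ p ^ a) ^ p - (1 + monom 1 (p ^ a) ^ p)"
    by (metis dvd_add diff_add_cancel add_diff_eq)
  then show ?case by (simp add: power_mult[symmetric] monom_altdef mult.commute)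
qed

lemma const_poly_dvd_mult_monom_iff: "[:c:] dvd p * monom 1 m \<longleftrightarrow> [:c:] dvd p"
  for c :: int
proof -
  have "coeff (p * monom 1 m) j = (if j < m then 0 else coeff p (j - m))" for j
    by (metis coeff_monom_mult mult.commute mult_1)
  then show ?thesis
    unfolding const_poly_dvd_iff by (metis add_diff_cancel_right' dvd_0_right not_add_less2)
qed

definition low_coeffs_dvd :: "int \<Rightarrow> nat \<Rightarrow> int poly \<Rightarrow> bool" where
  "low_coeffs_dvd d k A \<longleftrightarrow> (\<forall>j<k. d dvd coeff A j)"

lemma low_coeffs_dvd_0 [simp]: "low_coeffs_dvd d k 0"
  by (simp add: low_coeffs_dvd_def)

lemma low_coeffs_dvd_add:
  "low_coeffs_dvd d k A \<Longrightarrow> low_coeffs_dvd d k B \<Longrightarrow> low_coeffs_dvd d k (A + B)"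
  by (simp add: low_coeffs_dvd_def)

lemma low_coeffs_dvd_diff:
  "low_coeffs_dvd d k A \<Longrightarrow> low_coeffs_dvd d k B \<Longrightarrow> low_coeffs_dvd d k (A - B)"
  by (simp add: low_coeffs_dvd_def)

lemma low_coeffs_dvd_minus_iff [simp]: "low_coeffs_dvd d k (- A) \<longleftrightarrow> low_coeffs_dvd d k A"
  by (simp add: low_coeffs_dvd_def)

lemma low_coeffs_dvd_smult: "low_coeffs_dvd d k A \<Longrightarrow> low_coeffs_dvd d k (smult c A)"
  by (simp add: low_coeffs_dvd_def)

lemma low_coeffs_dvd_mult_right: "low_coeffs_dvd d k A \<Longrightarrow> low_coeffs_dvd d k (A * B)"
  unfolding low_coeffs_dvd_def coeff_mult by (auto intro!: dvd_sum)

lemma low_coeffs_dvd_mult_left: "low_coeffs_dvd d k B \<Longrightarrow> low_coeffs_dvd d k (A * B)"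
  using low_coeffs_dvd_mult_right[of d k B A] by (simp add: mult.commute)

lemma low_coeffs_dvd_power_diff:
  "low_coeffs_dvd d k (A - B) \<Longrightarrow> low_coeffs_dvd d k (A ^ n - B ^ n)"
  by (simp add: power_diff_sumr2 low_coeffs_dvd_mult_right)

lemma low_coeffs_dvd_mono: "low_coeffs_dvd d k A \<Longrightarrow> k' \<le> k \<Longrightarrow> low_coeffs_dvd d k' A"
  by (simp add: low_coeffs_dvd_def)

lemma low_coeffs_dvd_3_iff:
  "low_coeffs_dvd d 3 A \<longleftrightarrow> d dvd coeff A 0 \<and> d dvd coeff A 1 \<and> d dvd coeff A 2"
  unfolding low_coeffs_dvd_def numeral_3_eq_3 numeral_2_eq_2 by (auto simp: less_Suc_eq)

lemma low_coeffs_dvd_if_const_poly_dvd: "[:d:] dvd A \<Longrightarrow> low_coeffs_dvd d k A"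
  by (simp add: low_coeffs_dvd_def const_poly_dvd_iff)

lemma low_coeffs_dvd_monom: "k \<le> n \<Longrightarrow> low_coeffs_dvd d k (monom c n)"
  by (simp add: low_coeffs_dvd_def coeff_monom)

lemma low_coeffs_dvd_pcompose:
  "low_coeffs_dvd d k A \<Longrightarrow> coeff H 0 = 0 \<Longrightarrow> low_coeffs_dvd d k (pcompose A H)"
proof (induction A arbitrary: k)
  case (pCons a A)
  show ?case
  proof (cases k)
    case (Suc k')
    from pCons.prems obtain H' where H: "H = pCons 0 H'" by (cases H) auto
    have "d dvd a" "low_coeffs_dvd d k' A"
      using pCons.prems(1) Suc by (auto simp: low_coeffs_dvd_def dest: spec[of _ 0] spec[of _ "Suc _"])
    then have "low_coeffs_dvd d k' (H' * pcompose A H)"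
      using pCons.IH pCons.prems(2) by (simp add: low_coeffs_dvd_mult_left)
    with \<open>d dvd a\<close> show ?thesis
      using Suc H by (auto simp: pcompose_pCons low_coeffs_dvd_def coeff_pCons less_Suc_eq_0_disj)
  qed (simp add: low_coeffs_dvd_def)
qed simp

lemma low_coeffs_dvd_imp_decomp:
  assumes "low_coeffs_dvd d k T"
  obtains C S where "T = smult d C + monom 1 k * S"
proof
  define C where "C = map_poly (\<lambda>a. a div d) (poly_cutoff k T)"
  have "poly_cutoff k T = smult d C"
    using assms by (intro poly_eqI) (simp add: C_def coeff_map_poly coeff_poly_cutoff low_coeffs_dvd_def)
  moreover have "T = poly_cutoff k T + monom 1 k * poly_shift k T"
    by (rule poly_eqI) (simp add: coeff_poly_cutoff coeff_poly_shift coeff_monom_mult)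
  ultimately show "T = smult d C + monom 1 k * poly_shift k T" by simp
qed

lemma low_coeffs_dvd_mult_one_plus_monom:
  assumes m: "1 \<le> m" and G: "low_coeffs_dvd d m (G - 1)"
    and H: "low_coeffs_dvd d (Suc m) (H - (1 + monom t m))" and t: "d dvd coeff G m + t"
  shows "low_coeffs_dvd d (Suc m) (H * G - 1)"
proof -
  have "d dvd coeff (G - 1 + monom t m * G) j" if "j < Suc m" for j
  proof (cases "j < m")
    case True
    with G show ?thesis by (simp add: low_coeffs_dvd_def coeff_monom_mult)
  next
    case False
    with that have "j = m" by simp
    have "d dvd coeff G 0 - 1" using spec[OF G[unfolded low_coeffs_dvd_def], of 0] m by simp
    then have "d dvd t * (coeff G 0 - 1) + (coeff G m + t)" using t by simp
    also have "t * (coeff G 0 - 1) + (coeff G m + t) = coeff (G - 1 + monom t m * G) j"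
      using \<open>j = m\<close> m by (simp add: coeff_monom_mult right_diff_distrib)
    finally show ?thesis .
  qed
  then have "low_coeffs_dvd d (Suc m) (G - 1 + monom t m * G)"
    by (simp add: low_coeffs_dvd_def)
  moreover have "low_coeffs_dvd d (Suc m) ((H - (1 + monom t m)) * G)"
    using H by (rule low_coeffs_dvd_mult_right)
  ultimately have "low_coeffs_dvd d (Suc m) ((H - (1 + monom t m)) * G + (G - 1 + monom t m * G))"
    by (simp add: low_coeffs_dvd_add)
  then show ?thesis by (simp add: algebra_simps)
qed

definition shift1 :: "int poly \<Rightarrow> int poly" where
  "shift1 p = pcompose p [:1, 1:]"

lemma shift1_0 [simp]: "shift1 0 = 0"
  and shift1_1 [simp]: "shift1 1 = 1"
  and shift1_const [simp]: "shift1 [:a:] = [:a:]"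
  and shift1_add [simp]: "shift1 (p + q) = shift1 p + shift1 q"
  and shift1_diff [simp]: "shift1 (p - q) = shift1 p - shift1 q"
  and shift1_minus [simp]: "shift1 (- p) = - shift1 p"
  and shift1_mult [simp]: "shift1 (p * q) = shift1 p * shift1 q"
  and shift1_smult [simp]: "shift1 (smult a p) = smult a (shift1 p)"
  by (simp_all add: shift1_def pcompose_add pcompose_diff pcompose_uminus pcompose_mult
      pcompose_smult pcompose_1)

lemma shift1_power [simp]: "shift1 (p ^ k) = shift1 p ^ k"
  by (simp add: shift1_def pcompose_power_left)

lemma shift1_monom [simp]: "shift1 (monom c k) = smult c ([:1, 1:] ^ k)"
  by (simp add: monom_altdef shift1_def pcompose_smult pcompose_power_left pcompose_pCons)

lemma shift1_X_minus_1 [simp]: "shift1 [:-1, 1:] = [:0, 1:]"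
  by (simp add: shift1_def pcompose_pCons)

lemma shift1_one_plus_X [simp]: "shift1 [:1, 1:] = [:2, 1:]"
  by (simp add: shift1_def pcompose_pCons)

lemma shift1_X_minus_1_power_mult: "shift1 ([:-1, 1:] ^ k * A) = monom 1 k * shift1 A"
  by (simp add: monom_altdef)

lemma coeff_0_shift1: "coeff (shift1 p) 0 = poly p 1"
  by (simp add: shift1_def poly_0_coeff_0[symmetric] poly_pcompose)

lemma degree_shift1 [simp]: "degree (shift1 p) = degree p"
  by (simp add: shift1_def degree_pcompose)

lemma lead_coeff_shift1: "lead_coeff (shift1 p) = lead_coeff p"
  by (simp add: shift1_def lead_coeff_comp)

lemma shift1_pcompose: "shift1 (pcompose p q) = pcompose (shift1 p) (shift1 q - 1)"
proof -
  have "pcompose [:1, 1:] (shift1 q - 1) = shift1 q"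
    by (simp add: pcompose_pCons)
  then show ?thesis
    unfolding shift1_def by (simp add: pcompose_assoc[symmetric])
qed

(* A = B modulo the ideal (5, (X - 1)^k) of Z[X].  Since 5 is a unit times a power
   lambda^(4 * 5^(i-1)) of lambda = omega - 1, for k <= 4 this is the congruence
   A(omega) = B(omega) modulo lambda^k in Z[omega]. *)
definition cong5 :: "nat \<Rightarrow> int poly \<Rightarrow> int poly \<Rightarrow> bool" where
  "cong5 k A B \<longleftrightarrow> low_coeffs_dvd 5 k (shift1 (A - B))"

lemma cong5_refl [simp]: "cong5 k A A"
  by (simp add: cong5_def)

lemma cong5_sym: "cong5 k A B \<Longrightarrow> cong5 k B A"
  using low_coeffs_dvd_minus_iff[of 5 k "shift1 (A - B)"] by (simp add: cong5_def)

lemma cong5_trans [trans]: "cong5 k A B \<Longrightarrow> cong5 k B C \<Longrightarrow> cong5 k A C"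
  using low_coeffs_dvd_add[of 5 k "shift1 (A - B)" "shift1 (B - C)"] by (simp add: cong5_def)

lemma cong5_add: "cong5 k A B \<Longrightarrow> cong5 k C D \<Longrightarrow> cong5 k (A + C) (B + D)"
  using low_coeffs_dvd_add[of 5 k "shift1 (A - B)" "shift1 (C - D)"]
  by (simp add: cong5_def algebra_simps)

lemma cong5_diff: "cong5 k A B \<Longrightarrow> cong5 k C D \<Longrightarrow> cong5 k (A - C) (B - D)"
  using low_coeffs_dvd_diff[of 5 k "shift1 (A - B)" "shift1 (C - D)"]
  by (simp add: cong5_def algebra_simps)

lemma cong5_smult: "cong5 k A B \<Longrightarrow> cong5 k (smult c A) (smult c B)"
  using low_coeffs_dvd_smult[of 5 k "shift1 (A - B)" c] by (simp add: cong5_def smult_diff_right)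

lemma cong5_mult: "cong5 k A B \<Longrightarrow> cong5 k C D \<Longrightarrow> cong5 k (A * C) (B * D)"
proof -
  assume "cong5 k A B" "cong5 k C D"
  then have "low_coeffs_dvd 5 k (shift1 (A - B) * shift1 C + shift1 B * shift1 (C - D))"
    unfolding cong5_def by (intro low_coeffs_dvd_add low_coeffs_dvd_mult_right low_coeffs_dvd_mult_left)
  then show ?thesis by (simp add: cong5_def algebra_simps)
qed

lemma cong5_power: "cong5 k A B \<Longrightarrow> cong5 k (A ^ n) (B ^ n)"
  using low_coeffs_dvd_power_diff[of 5 k "shift1 A" "shift1 B" n] by (simp add: cong5_def)

lemma cong5_mono: "cong5 k A B \<Longrightarrow> k' \<le> k \<Longrightarrow> cong5 k' A B"
  unfolding cong5_def by (rule low_coeffs_dvd_mono)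

lemma cong5_pcompose:
  assumes "cong5 k A B" "poly G 1 = 1"
  shows "cong5 k (pcompose A G) (pcompose B G)"
proof -
  have "low_coeffs_dvd 5 k (pcompose (shift1 (A - B)) (shift1 G - 1))"
    using assms by (intro low_coeffs_dvd_pcompose) (simp_all add: cong5_def coeff_0_shift1)
  then show ?thesis by (simp add: cong5_def shift1_pcompose[symmetric] pcompose_diff)
qed

lemma cong5_coeffD:
  "cong5 k A B \<Longrightarrow> j < k \<Longrightarrow> 5 dvd coeff (shift1 A) j - coeff (shift1 B) j"
  by (simp add: cong5_def low_coeffs_dvd_def)

lemma cong5_X_minus_1_power_mult: "cong5 k ([:-1, 1:] ^ k * Q) 0"
  unfolding cong5_def diff_zero shift1_X_minus_1_power_mult
  by (simp add: low_coeffs_dvd_def coeff_monom_mult)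

lemma cong5_X_minus_1_cube_square: "cong5 4 (([:-1, 1:] ^ 3 * A) * ([:-1, 1:] ^ 3 * B)) 0"
proof -
  have "([:-1, 1:] ^ 3 * A) * ([:-1, 1:] ^ 3 * B) = [:-1, 1:] ^ (3 + 3) * (A * B)"
    by (simp only: power_add mult_ac)
  also have "\<dots> = [:-1, 1:] ^ 4 * ([:-1, 1:] ^ 2 * (A * B))"
    by (simp add: mult.assoc[symmetric] flip: power_add)
  finally show ?thesis by (simp only: cong5_X_minus_1_power_mult)
qed

lemma cong5_3_one_plus_X_minus_1_cube_mult: "cong5 3 (1 + [:-1, 1:] ^ 3 * A) 1"
  using cong5_add[OF cong5_refl cong5_X_minus_1_power_mult[of 3 A]] by simp

lemma cong5_X_minus_1_cube_mult_coeff: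
  assumes "cong5 4 (1 + [:-1, 1:] ^ 3 * A) (1 + [:-1, 1:] ^ 3 * B)"
  shows "5 dvd poly A 1 - poly B 1"
proof -
  have "5 dvd coeff (shift1 (1 + [:-1, 1:] ^ 3 * A)) 3 - coeff (shift1 (1 + [:-1, 1:] ^ 3 * B)) 3"
    using assms by (rule cong5_coeffD) simp
  then show ?thesis
    by (simp only: shift1_add shift1_1 shift1_X_minus_1_power_mult) (simp add: coeff_monom_mult coeff_0_shift1)
qed

lemma cong5_one_plus_power:
  assumes "cong5 k (E * E) 0"
  shows "cong5 k ((1 + E) ^ n) (1 + smult (of_nat n) E)"
proof (induction n)
  case (Suc n)
  define F where "F = 1 + smult (of_nat (Suc n)) E"
  have "cong5 k ((1 + E) * (1 + E) ^ n) ((1 + E) * (1 + smult (of_nat n) E))"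
    using Suc by (intro cong5_mult) simp_all
  also have "(1 + E) * (1 + smult (of_nat n) E) = F + smult (of_nat n) (E * E)"
    by (simp add: F_def algebra_simps smult_add_left smult_add_right)
  also have "cong5 k \<dots> (F + smult (of_nat n) 0)"
    using assms by (intro cong5_add cong5_smult) simp_all
  finally show ?case by (simp add: F_def)
qed simp

lemma cong5_unit_inverse:
  assumes UV: "cong5 k (U * V) 1" and U: "cong5 k U (1 + E)" and E: "cong5 k (E * E) 0"
  shows "cong5 k V (1 - E)"
proof -
  have "cong5 k V (V * ((1 + E) * (1 - E)))"
  proof -
    have "cong5 k (1 - E * E) (1 - 0)" using E by (intro cong5_diff) simp_all
    then have "cong5 k (V * ((1 + E) * (1 - E))) (V * 1)"
      by (intro cong5_mult) (simp_all add: algebra_simps)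
    from cong5_sym[OF this] show ?thesis by simp
  qed
  also have "cong5 k (V * ((1 + E) * (1 - E))) (V * (U * (1 - E)))"
    using cong5_sym[OF U] by (intro cong5_mult) simp_all
  also have "V * (U * (1 - E)) = (U * V) * (1 - E)" by (simp add: ac_simps)
  also have "cong5 k \<dots> (1 * (1 - E))" using UV by (intro cong5_mult) simp_all
  finally show ?thesis by simp
qed

lemma cong5_monom_5pow:
  assumes "a \<ge> 1"
  shows "cong5 4 (monom 1 (5 ^ a)) 1"
proof -
  have "low_coeffs_dvd 5 4 ([:1, 1:] ^ 5 ^ a - (1 + monom 1 (5 ^ a)))"
    using const_poly_dvd_frobenius[of 5 a] by (simp add: low_coeffs_dvd_if_const_poly_dvd)
  moreover have "4 \<le> (5::nat) ^ a"
    using power_increasing[OF assms, of "5::nat"] by simp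
  ultimately have "low_coeffs_dvd 5 4 (([:1, 1:] ^ 5 ^ a - (1 + monom 1 (5 ^ a))) + monom 1 (5 ^ a))"
    by (intro low_coeffs_dvd_add low_coeffs_dvd_monom)
  then show ?thesis by (simp add: cong5_def)
qed

section \<open>The cyclotomic polynomial\<close>

(* Phi_5(X^m); for m = 5^(i-1) this is the 5^i-th cyclotomic polynomial. *)
definition Phi5 :: "nat \<Rightarrow> int poly" where
  "Phi5 m = 1 + monom 1 m + monom 1 (2 * m) + monom 1 (3 * m) + monom 1 (4 * m)"

lemma monom_mult_power: "monom (1::int) (k * m) = monom 1 m ^ k"
  by (simp add: monom_altdef mult.commute[of k] power_mult)

lemma Phi5_mult_monom_minus_1: "Phi5 m * (monom 1 m - 1) = monom 1 (5 * m) - 1"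
  unfolding Phi5_def monom_mult_power by (simp add: algebra_simps eval_nat_numeral)

lemma poly_Phi5_1 [simp]: "poly (Phi5 m) 1 = 5"
  by (simp add: Phi5_def poly_monom)

lemma degree_Phi5_lower_part:
  "degree (1 + monom (1::int) m + monom 1 (2 * m) + monom 1 (3 * m)) \<le> 3 * m"
  by (intro degree_add_le) (auto intro: order.trans[OF degree_monom_le])

lemma degree_Phi5: "m \<ge> 1 \<Longrightarrow> degree (Phi5 m) = 4 * m"
  unfolding Phi5_def using degree_Phi5_lower_part[of m]
  by (subst degree_add_eq_right) (auto simp: degree_monom_eq)

lemma lead_coeff_Phi5: "m \<ge> 1 \<Longrightarrow> lead_coeff (Phi5 m) = 1"
proof -
  assume "m \<ge> 1"
  then have "coeff (1 + monom (1::int) m + monom 1 (2 * m) + monom 1 (3 * m)) (4 * m) = 0"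
    using degree_Phi5_lower_part[of m] by (intro coeff_eq_0) simp
  then have "coeff (Phi5 m) (4 * m) = 1" by (simp add: Phi5_def)
  with \<open>m \<ge> 1\<close> show ?thesis by (simp add: degree_Phi5)
qed

lemma ev_Phi5_omega_pow:
  assumes "i \<ge> 1" "\<not> 5 dvd k"
  shows "ev (Phi5 (5 ^ (i - 1))) (omega i ^ k) = 0"
proof -
  define y where "y = omega i ^ (k * 5 ^ (i - 1))"
  have "ev (Phi5 (5 ^ (i - 1))) (omega i ^ k) = 1 + y + y ^ 2 + y ^ 3 + y ^ 4"
    by (simp add: Phi5_def y_def power_mult[symmetric] ac_simps)
  moreover have "y ^ 5 = 1"
    using assms(1) by (simp add: y_def power_mult[symmetric] omega_pow_eq_1_iff five_pow_eq)
  moreover have "y \<noteq> 1"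
    unfolding y_def using assms by (rule omega_pow_mult_5pow_pred_neq_1)
  moreover have "(1 + y + y ^ 2 + y ^ 3 + y ^ 4) * (y - 1) = y ^ 5 - 1"
    by (simp add: algebra_simps eval_nat_numeral)
  ultimately show ?thesis by simp
qed

lemma const_poly_dvd_shift1_Phi5: "[:5:] dvd shift1 (Phi5 (5 ^ a)) - monom 1 (4 * 5 ^ a)"
proof -
  define m where "m = (5::nat) ^ a"
  define P where "P = shift1 (Phi5 m)"
  define A where "A = [:1, 1::int:] ^ m"
  define B where "B = [:1, 1::int:] ^ (5 * m)"
  have "P * (A - 1) = B - 1"
    using arg_cong[OF Phi5_mult_monom_minus_1[of m], of shift1] by (simp add: P_def A_def B_def)
  then have "(P - monom 1 (4 * m)) * monom 1 m = (B - (1 + monom 1 (5 * m))) - P * (A - (1 + monom 1 m))"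
    by (simp add: algebra_simps mult_monom)
  moreover have "[:5:] dvd A - (1 + monom 1 m)" "[:5:] dvd B - (1 + monom 1 (5 * m))"
    using const_poly_dvd_frobenius[of 5 a] const_poly_dvd_frobenius[of 5 "Suc a"]
    by (simp_all add: A_def B_def m_def)
  ultimately have "[:5:] dvd (P - monom 1 (4 * m)) * monom 1 m"
    by (simp add: dvd_diff dvd_mult)
  then show ?thesis by (simp add: const_poly_dvd_mult_monom_iff P_def m_def)
qed

lemma shift1_Phi5_Eisenstein:
  fixes a :: nat
  defines "P \<equiv> shift1 (Phi5 (5 ^ a))"
  shows "lead_coeff P = 1" "degree P = 4 * 5 ^ a" "\<forall>j<degree P. 5 dvd coeff P j" "coeff P 0 = 5"
proof -
  have "lead_coeff P = lead_coeff (Phi5 (5 ^ a))"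
    unfolding P_def by (rule lead_coeff_shift1)
  then show "lead_coeff P = 1" by (simp add: lead_coeff_Phi5)
  show deg: "degree P = 4 * 5 ^ a" by (simp add: P_def degree_Phi5)
  show "\<forall>j<degree P. 5 dvd coeff P j"
  proof (intro allI impI)
    fix j assume "j < degree P"
    then have "coeff (monom 1 (4 * 5 ^ a)) j = 0" by (simp add: deg)
    with const_poly_dvd_shift1_Phi5[of a] show "5 dvd coeff P j"
      unfolding P_def const_poly_dvd_iff by (metis coeff_diff diff_zero)
  qed
  show "coeff P 0 = 5" by (simp add: P_def coeff_0_shift1)
qed

lemma prime_not_dvd_coeff_mult:
  fixes A B :: "int poly"
  assumes "prime p"
    and "\<forall>j<r. p dvd coeff A j" "\<not> p dvd coeff A r"
    and "\<forall>j<s. p dvd coeff B j" "\<not> p dvd coeff B s"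
  shows "\<not> p dvd coeff (A * B) (r + s)"
proof
  define rest where "rest = (\<Sum>x\<in>{..r + s} - {r}. coeff A x * coeff B (r + s - x))"
  have "coeff (A * B) (r + s) = coeff A r * coeff B s + rest"
    unfolding rest_def coeff_mult by (subst sum.remove[of _ r]) auto
  moreover have "p dvd coeff A x * coeff B (r + s - x)" if "x \<in> {..r + s} - {r}" for x
  proof (cases "x < r")
    case False
    with that have "r + s - x < s" by auto
    with assms(4) show ?thesis by simp
  qed (simp add: assms(2))
  then have "p dvd rest" unfolding rest_def by (rule dvd_sum)
  moreover assume "p dvd coeff (A * B) (r + s)"
  ultimately have "p dvd coeff A r * coeff B s" by (metis dvd_add_left_iff)
  with assms show False by (simp add: prime_dvd_mult_iff)
qed

lemma eisenstein_criterion: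
  fixes A B :: "int poly"
  assumes p: "prime p" and lead: "\<not> p dvd lead_coeff (A * B)"
    and low: "\<forall>j<degree (A * B). p dvd coeff (A * B) j"
    and const: "\<not> p ^ 2 dvd coeff (A * B) 0"
  shows "degree A = 0 \<or> degree B = 0"
proof (rule ccontr)
  assume nonconst: "\<not> (degree A = 0 \<or> degree B = 0)"
  then have "A \<noteq> 0" "B \<noteq> 0" by auto
  then have deg: "degree (A * B) = degree A + degree B" by (rule degree_mult_eq)
  have "\<not> p dvd lead_coeff A" "\<not> p dvd lead_coeff B"
    using lead by (auto simp: lead_coeff_mult)
  then obtain r s where r: "\<not> p dvd coeff A r" "\<forall>j<r. p dvd coeff A j"
    and s: "\<not> p dvd coeff B s" "\<forall>j<s. p dvd coeff B j"
    using exists_least_iff[of "\<lambda>j. \<not> p dvd coeff A j"]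
      exists_least_iff[of "\<lambda>j. \<not> p dvd coeff B j"]
    by blast
  have "r \<le> degree A" "s \<le> degree B"
    using r(1) s(1) by (auto intro: le_degree)
  moreover have "\<not> p dvd coeff (A * B) (r + s)"
    using p r s by (intro prime_not_dvd_coeff_mult) auto
  then have "degree (A * B) \<le> r + s" using low by (meson not_le)
  ultimately have "r = degree A" "s = degree B" using deg by linarith+
  then have "p dvd coeff A 0" "p dvd coeff B 0" using r(2) s(2) nonconst by auto
  then have "p ^ 2 dvd coeff A 0 * coeff B 0" by (simp add: power2_eq_square mult_dvd_mono)
  with const show False by (simp add: coeff_mult_0)
qed

lemma minimal_root_poly_dvd:
  fixes p g :: "int poly"
  assumes prim: "content p = 1" and root: "ev p z = 0"
    and minimal: "\<And>q. q \<noteq> 0 \<Longrightarrow> ev q z = 0 \<Longrightarrow> degree p \<le> degree q"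
    and "ev g z = 0"
  shows "p dvd g"
proof -
  have "p \<noteq> 0" using prim by auto
  obtain q r where qr: "pseudo_divmod g p = (q, r)" by (cases "pseudo_divmod g p")
  define c where "c = lead_coeff p ^ (Suc (degree g) - degree p)"
  have "c \<noteq> 0" using \<open>p \<noteq> 0\<close> by (simp add: c_def)
  have eq: "smult c g = p * q + r" and "r = 0 \<or> degree r < degree p"
    using pseudo_divmod[OF \<open>p \<noteq> 0\<close> qr] by (simp_all add: c_def)
  moreover have "ev r z = 0"
    using arg_cong[OF eq, of "\<lambda>h. ev h z"] root \<open>ev g z = 0\<close> by simp
  ultimately have "r = 0" using minimal[of r] by force
  then have "primitive_part p dvd primitive_part (smult c g)" using eq by auto
  then have "p dvd smult (sgn c) (primitive_part g)"
    using prim by (simp add: primitive_part_prim primitive_part_smult)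
  then have "p dvd smult (sgn c) (smult (sgn c) (primitive_part g))" by (rule dvd_smult)
  also have "\<dots> = primitive_part g" using \<open>c \<noteq> 0\<close> by (simp add: abs_mult_self_eq)
  also have "\<dots> dvd g" by (metis content_times_primitive_part dvd_smult dvd_refl)
  finally show ?thesis .
qed

lemma exists_minimal_root_poly:
  fixes g :: "int poly"
  assumes "g \<noteq> 0" "ev g z = 0"
  shows "\<exists>p. content p = 1 \<and> ev p z = 0 \<and> (\<forall>q. ev q z = 0 \<longrightarrow> p dvd q)"
proof -
  obtain m where m: "m \<noteq> 0 \<and> ev m z = 0"
    and least: "\<And>q. q \<noteq> 0 \<and> ev q z = 0 \<Longrightarrow> degree m \<le> degree q"
    using ex_has_least_nat[of "\<lambda>q. q \<noteq> 0 \<and> ev q z = 0" g degree] assms by metis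
  define p where "p = primitive_part m"
  have "ev m z = of_int (content m) * ev p z"
    by (metis content_times_primitive_part ev_smult p_def)
  then have root: "ev p z = 0" using m by simp
  have prim: "content p = 1" using m by (simp add: p_def content_primitive_part)
  have minimal: "degree p \<le> degree q" if "q \<noteq> 0" "ev q z = 0" for q
    using least[of q] that by (simp add: p_def)
  have "p dvd q" if "ev q z = 0" for q
    using prim root minimal that by (rule minimal_root_poly_dvd)
  with prim root show ?thesis by blast
qed

(* The primitive generator p of the ideal of polynomials vanishing at omega divides Phi5, and
   the cofactor is a unit because Phi5(X + 1) is Eisenstein. *)
lemma Phi5_dvd_if_root:
  assumes i: "i \<ge> 1" and root: "ev G (omega i) = 0"
  shows "Phi5 (5 ^ (i - 1)) dvd G"
proof -
  define \<Phi> where "\<Phi> = Phi5 (5 ^ (i - 1))"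
  have "\<Phi> \<noteq> 0" using lead_coeff_Phi5[of "5 ^ (i - 1)"] by (auto simp: \<Phi>_def)
  moreover have \<Phi>_root: "ev \<Phi> (omega i) = 0"
    using ev_Phi5_omega_pow[OF i, of 1] by (simp add: \<Phi>_def)
  ultimately obtain p where p: "content p = 1" "ev p (omega i) = 0"
    and p_dvd: "\<And>q. ev q (omega i) = 0 \<Longrightarrow> p dvd q"
    using exists_minimal_root_poly by blast
  obtain q where q: "\<Phi> = p * q" using p_dvd[OF \<Phi>_root] by (elim dvdE)
  then have "shift1 p * shift1 q = shift1 (Phi5 (5 ^ (i - 1)))" by (simp add: \<Phi>_def)
  then have "degree (shift1 p) = 0 \<or> degree (shift1 q) = 0"
    using shift1_Phi5_Eisenstein[of "i - 1"] by (intro eisenstein_criterion[of 5]) simp_all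
  moreover have "degree p \<noteq> 0"
  proof
    assume "degree p = 0"
    then obtain c where "p = [:c:]" by (elim degree_eq_zeroE)
    with p show False by simp
  qed
  ultimately obtain c where c: "q = [:c:]" by (auto elim: degree_eq_zeroE)
  have "lead_coeff \<Phi> = 1" unfolding \<Phi>_def by (rule lead_coeff_Phi5) simp
  then have "lead_coeff p * c = 1" by (cases "c = 0") (simp_all add: q c mult.commute)
  then have "is_unit [:c:]" by (metis dvd_triv_right is_unit_const_poly_iff)
  then have "\<Phi> dvd G" unfolding q c using p_dvd[OF root] by (rule mult_unit_dvd_iff[THEN iffD2])
  then show ?thesis by (simp add: \<Phi>_def)
qed

lemma ev_omega_pow_eq_0_if_root:
  assumes "i \<ge> 1" "ev G (omega i) = 0" "\<not> 5 dvd k"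
  shows "ev G (omega i ^ k) = 0"
proof -
  obtain q where "G = Phi5 (5 ^ (i - 1)) * q" using Phi5_dvd_if_root[OF assms(1,2)] by (elim dvdE)
  then show ?thesis using ev_Phi5_omega_pow[OF assms(1,3)] by simp
qed

lemma five_dvd_poly_1_if_root:
  assumes "i \<ge> 1" "ev G (omega i) = 0"
  shows "5 dvd poly G 1"
proof -
  obtain q where "G = Phi5 (5 ^ (i - 1)) * q" using Phi5_dvd_if_root[OF assms] by (elim dvdE)
  then show ?thesis by simp
qed

lemma cong5_if_ev_eq:
  assumes i: "i \<ge> 1" and eq: "ev A (omega i) = ev B (omega i)"
  shows "cong5 4 A B"
proof -
  have "Phi5 (5 ^ (i - 1)) dvd A - B" using eq by (intro Phi5_dvd_if_root[OF i]) simp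
  then obtain q where q: "A - B = Phi5 (5 ^ (i - 1)) * q" by (elim dvdE)
  have "j < 4 * 5 ^ (i - 1)" if "j < 4" for j :: nat
    using that one_le_power[of "5::nat" "i - 1"] by linarith
  then have "low_coeffs_dvd 5 4 (shift1 (Phi5 (5 ^ (i - 1))))"
    using shift1_Phi5_Eisenstein(2,3)[of "i - 1"] by (simp add: low_coeffs_dvd_def)
  then show ?thesis by (simp add: cong5_def q low_coeffs_dvd_mult_right)
qed

lemma eq_0_if_root_degree_less:
  assumes "i \<ge> 1" "ev G (omega i) = 0" "degree G < 4 * 5 ^ (i - 1)"
  shows "G = 0"
proof (rule ccontr)
  assume "G \<noteq> 0"
  with Phi5_dvd_if_root[OF assms(1,2)] have "degree (Phi5 (5 ^ (i - 1))) \<le> degree G"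
    by (rule dvd_imp_degree_le)
  with assms(3) show False by (simp add: degree_Phi5)
qed

lemma ev_omega_Ints_if_multiple:
  assumes i: "i \<ge> 1" and "N > 0" and "of_nat N * ev P (omega i) \<in> \<int>"
  shows "ev P (omega i) \<in> \<int>"
proof -
  define \<Phi> where "\<Phi> = Phi5 (5 ^ (i - 1))"
  have lead: "lead_coeff \<Phi> = 1" unfolding \<Phi>_def by (rule lead_coeff_Phi5) simp
  have deg: "degree \<Phi> = 4 * 5 ^ (i - 1)" by (simp add: \<Phi>_def degree_Phi5)
  then have "\<Phi> \<noteq> 0" by auto
  obtain q r where qr: "pseudo_divmod P \<Phi> = (q, r)" by (cases "pseudo_divmod P \<Phi>")
  have "P = \<Phi> * q + r" and r: "r = 0 \<or> degree r < degree \<Phi>"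
    using pseudo_divmod[OF \<open>\<Phi> \<noteq> 0\<close> qr] lead by simp_all
  moreover have "ev \<Phi> (omega i) = 0"
    using ev_Phi5_omega_pow[OF i, of 1] by (simp add: \<Phi>_def)
  ultimately have P_r: "ev P (omega i) = ev r (omega i)" by simp
  obtain c where c: "of_nat N * ev r (omega i) = of_int c"
    using assms(3) P_r by (auto elim: Ints_cases)
  have "degree (smult (int N) r - [:c:]) < 4 * 5 ^ (i - 1)"
    using r deg degree_diff_le_max[of "smult (int N) r" "[:c:]"] \<open>N > 0\<close> by auto
  moreover have "ev (smult (int N) r - [:c:]) (omega i) = 0" using c by simp
  ultimately have "smult (int N) r = [:c:]" using eq_0_if_root_degree_less[OF i] by fastforce
  then have "degree (smult (int N) r) = 0" by simp
  then obtain c' where "r = [:c':]" using \<open>N > 0\<close> by (auto elim: degree_eq_zeroE)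
  then show ?thesis by (simp add: P_r)
qed

section \<open>Traces and norms\<close>

lemma totatives_5pow_eq:
  assumes "i \<ge> 1"
  shows "{j. 1 \<le> j \<and> j \<le> 5 ^ i \<and> \<not> (5::nat) dvd j} = totatives (5 ^ i)"
proof -
  have "coprime j (5::nat) \<longleftrightarrow> \<not> 5 dvd j" for j
  proof
    assume "coprime j 5"
    then show "\<not> 5 dvd j" using coprime_common_divisor[of j 5 5] by auto
  next
    assume "\<not> 5 dvd j"
    then show "coprime j 5" using prime_imp_coprime[of 5 j] by (simp add: coprime_commute)
  qed
  then have "j \<in> totatives (5 ^ i) \<longleftrightarrow> 1 \<le> j \<and> j \<le> 5 ^ i \<and> \<not> 5 dvd j" for j
    using assms by (simp add: in_totatives_iff Suc_le_eq)
  then show ?thesis by (simp add: set_eq_iff)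
qed

lemma not_five_dvd_if_in_totatives: "i \<ge> 1 \<Longrightarrow> k \<in> totatives (5 ^ i) \<Longrightarrow> \<not> 5 dvd k"
  by (simp flip: totatives_5pow_eq)

lemma Nnorm_eq_prod_totatives:
  "i \<ge> 1 \<Longrightarrow> Nnorm i f = (\<Prod>j\<in>totatives (5 ^ i). ev f (omega i ^ j))"
  unfolding Nnorm_def by (simp only: totatives_5pow_eq)

lemma bij_betw_totatives_mult_mod:
  assumes "coprime k n" "n > 1"
  shows "bij_betw (\<lambda>j. k * j mod n) (totatives n) (totatives n)"
proof -
  have "(\<lambda>j. k * j mod n) ` totatives n \<subseteq> totatives n"
  proof
    fix x assume "x \<in> (\<lambda>j. k * j mod n) ` totatives n"
    then obtain j where j: "j \<in> totatives n" and x: "x = k * j mod n" by blast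
    have "coprime (k * j) n" using assms j by (simp add: in_totatives_iff)
    then have "\<not> n dvd k * j" using coprime_common_divisor[of "k * j" n n] assms(2) by auto
    then show "x \<in> totatives n"
      using \<open>coprime (k * j) n\<close> assms(2)
      by (auto simp: x in_totatives_iff mod_greater_zero_iff_not_dvd)
  qed
  moreover have "inj_on (\<lambda>j. k * j mod n) (totatives n)"
  proof (rule inj_onI)
    fix a b assume "a \<in> totatives n" "b \<in> totatives n" "k * a mod n = k * b mod n"
    then have "[a = b] (mod n)" "a < n" "b < n"
      using assms by (simp_all add: cong_def[symmetric] cong_mult_lcancel_nat totatives_less)
    then show "a = b" by (simp add: cong_def)
  qed
  ultimately show ?thesis by (simp add: bij_betw_def endo_inj_surj)
qed

lemma sum_powers_root_of_unity_Ints: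
  assumes "y ^ N = (1::complex)"
  shows "(\<Sum>k\<in>{0<..N}. y ^ k) \<in> \<int>"
proof (cases "y = 1")
  case False
  have "{0<..N} = {Suc 0..N}" by auto
  then have "(\<Sum>k\<in>{0<..N}. y ^ k) = y * (\<Sum>k<N. y ^ k)"
    by (simp add: sum.atLeast1_atMost_eq sum_distrib_left)
  also have "\<dots> = 0" using False assms by (simp add: geometric_sum)
  finally show ?thesis by simp
qed simp

lemma sum_totatives_5pow_Ints:
  assumes "i \<ge> 1" "y ^ (5 ^ i) = (1::complex)"
  shows "(\<Sum>k\<in>totatives (5 ^ i). y ^ k) \<in> \<int>"
proof -
  obtain n where i: "i = Suc n" using assms(1) by (cases i) auto
  have sub: "(\<lambda>m. 5 * m) ` {0<..5 ^ n} \<subseteq> {0<..(5::nat) ^ Suc n}" by auto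
  have tot: "totatives (5 ^ Suc n) = {0<..5 ^ Suc n} - (\<lambda>m. 5 * m) ` {0<..(5::nat) ^ n}"
    by (rule totatives_prime_power_Suc) simp
  have "(\<Sum>k\<in>totatives (5 ^ i). y ^ k)
      = (\<Sum>k\<in>{0<..5 ^ Suc n}. y ^ k) - (\<Sum>k\<in>(\<lambda>m. 5 * m) ` {0<..5 ^ n}. y ^ k)"
    unfolding i tot by (intro sum_diff sub) simp
  also have "(\<Sum>k\<in>(\<lambda>m. 5 * m) ` {0<..5 ^ n}. y ^ k) = (\<Sum>m\<in>{0<..5 ^ n}. (y ^ 5) ^ m)"
    by (subst sum.reindex) (auto simp: inj_on_def power_mult)
  finally have eq: "(\<Sum>k\<in>totatives (5 ^ i). y ^ k)
      = (\<Sum>k\<in>{0<..5 ^ Suc n}. y ^ k) - (\<Sum>m\<in>{0<..5 ^ n}. (y ^ 5) ^ m)" .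
  moreover have "(y ^ 5) ^ (5 ^ n) = 1" using assms(2) by (simp add: i power_mult[symmetric])
  ultimately show ?thesis
    using assms(2) by (simp add: i sum_powers_root_of_unity_Ints)
qed

definition trace_omega :: "nat \<Rightarrow> int poly \<Rightarrow> complex" where
  "trace_omega i P = (\<Sum>k\<in>totatives (5 ^ i). ev P (omega i ^ k))"

lemma trace_omega_diff: "trace_omega i (P - Q) = trace_omega i P - trace_omega i Q"
  by (simp add: trace_omega_def sum_subtractf)

lemma trace_omega_Ints:
  assumes "i \<ge> 1"
  shows "trace_omega i P \<in> \<int>"
proof -
  have swap: "(omega i ^ k) ^ d = (omega i ^ d) ^ k" for k d
    by (simp only: power_mult[symmetric] mult.commute)
  have "trace_omega i P
      = (\<Sum>k\<in>totatives (5 ^ i). \<Sum>d\<le>degree P. of_int (coeff P d) * (omega i ^ d) ^ k)"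
    unfolding trace_omega_def ev_altdef by (simp only: swap)
  also have "\<dots> = (\<Sum>d\<le>degree P. of_int (coeff P d) * (\<Sum>k\<in>totatives (5 ^ i). (omega i ^ d) ^ k))"
    by (subst sum.swap) (simp add: sum_distrib_left)
  also have "\<dots> \<in> \<int>"
  proof -
    have "(omega i ^ d) ^ 5 ^ i = 1" for d
      by (simp add: power_mult[symmetric] mult.commute[of d] power_mult)
    then show ?thesis by (intro Ints_sum Ints_mult Ints_of_int sum_totatives_5pow_Ints[OF assms])
  qed
  finally show ?thesis .
qed

lemma norm_trace_omega_le:
  assumes "\<And>k. k \<in> totatives (5 ^ i) \<Longrightarrow> norm (ev P (omega i ^ k)) \<le> 1"
  shows "norm (trace_omega i P) \<le> totient (5 ^ i)"
proof -
  have "norm (trace_omega i P) \<le> (\<Sum>k\<in>totatives (5 ^ i). norm (ev P (omega i ^ k)))"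
    unfolding trace_omega_def by (rule norm_sum)
  also have "\<dots> \<le> (\<Sum>k\<in>totatives (5 ^ i). 1)" using assms by (intro sum_mono) simp
  finally show ?thesis by (simp add: totient_def)
qed

lemma cnj_ev_omega_pow:
  "cnj (ev D (omega i ^ k))
    = (\<Sum>d\<le>degree D. of_int (coeff D d) * (omega i ^ k) ^ ((5 ^ i - 1) * d mod 5 ^ i))"
proof -
  have pow: "(omega i ^ ((5 ^ i - 1) * k)) ^ d = (omega i ^ k) ^ ((5 ^ i - 1) * d mod 5 ^ i)" for d
  proof -
    have "(omega i ^ ((5 ^ i - 1) * k)) ^ d = omega i ^ (k * ((5 ^ i - 1) * d) mod 5 ^ i)"
      by (simp add: omega_pow_mod power_mult[symmetric] ac_simps)
    also have "k * ((5 ^ i - 1) * d) mod 5 ^ i = k * ((5 ^ i - 1) * d mod 5 ^ i) mod 5 ^ i"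
      by (simp add: mod_mult_right_eq)
    finally show ?thesis by (simp add: omega_pow_mod power_mult)
  qed
  have "cnj (ev D (omega i ^ k)) = ev D (omega i ^ ((5 ^ i - 1) * k))"
    by (simp only: ev_cnj cnj_omega_pow)
  also have "\<dots> = (\<Sum>d\<le>degree D. of_int (coeff D d) * (omega i ^ ((5 ^ i - 1) * k)) ^ d)"
    by (rule ev_altdef)
  finally show ?thesis by (simp only: pow)
qed

lemma ev_omega_eq_0_if_traces_eq_0:
  assumes i: "i \<ge> 1" and tr: "\<And>r. r < 5 ^ i \<Longrightarrow> trace_omega i (D * monom 1 r) = 0"
  shows "ev D (omega i) = 0"
proof -
  define T where "T = totatives (5 ^ i)"
  define rd where "rd d = ((5::nat) ^ i - 1) * d mod 5 ^ i" for d :: nat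
  have "(\<Sum>k\<in>T. complex_of_real ((norm (ev D (omega i ^ k)))\<^sup>2))
      = (\<Sum>k\<in>T. \<Sum>d\<le>degree D. of_int (coeff D d) * (ev D (omega i ^ k) * (omega i ^ k) ^ rd d))"
    by (simp only: complex_norm_square)
      (simp add: cnj_ev_omega_pow rd_def sum_distrib_left mult.left_commute)
  also have "\<dots> = (\<Sum>d\<le>degree D. of_int (coeff D d) * trace_omega i (D * monom 1 (rd d)))"
    unfolding trace_omega_def T_def by (subst sum.swap) (simp add: sum_distrib_left)
  also have "\<dots> = 0" using tr by (simp add: rd_def)
  finally have "complex_of_real (\<Sum>k\<in>T. (norm (ev D (omega i ^ k)))\<^sup>2) = 0"
    by (simp only: of_real_sum)
  then have "(\<Sum>k\<in>T. (norm (ev D (omega i ^ k)))\<^sup>2) = 0"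
    by (simp only: of_real_eq_0_iff)
  then have "\<forall>k\<in>T. (norm (ev D (omega i ^ k)))\<^sup>2 = 0"
    by (subst (asm) sum_nonneg_eq_0_iff) (simp_all add: T_def)
  moreover have "1 \<in> T" by (simp add: T_def)
  ultimately have "(norm (ev D (omega i ^ 1)))\<^sup>2 = 0" by blast
  then show ?thesis by simp
qed

definition norm_poly :: "nat \<Rightarrow> int poly \<Rightarrow> int poly" where
  "norm_poly i f = (\<Prod>j\<in>totatives (5 ^ i). pcompose f (monom 1 j))"

lemma ev_norm_poly: "ev (norm_poly i f) z = (\<Prod>j\<in>totatives (5 ^ i). ev f (z ^ j))"
  by (simp add: norm_poly_def ev_prod)

lemma ev_norm_poly_omega_pow:
  assumes i: "i \<ge> 1" and k: "k \<in> totatives (5 ^ i)"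
  shows "ev (norm_poly i f) (omega i ^ k) = ev (norm_poly i f) (omega i)"
proof -
  have "coprime k (5 ^ i)" using k by (simp add: in_totatives_iff)
  moreover have "(1::nat) < 5 ^ i" using i by (intro one_less_power) simp_all
  ultimately have bij: "bij_betw (\<lambda>j. k * j mod 5 ^ i) (totatives (5 ^ i)) (totatives (5 ^ i))"
    by (rule bij_betw_totatives_mult_mod)
  have "ev (norm_poly i f) (omega i ^ k)
      = (\<Prod>j\<in>totatives (5 ^ i). ev f (omega i ^ (k * j mod 5 ^ i)))"
    by (simp add: ev_norm_poly power_mult[symmetric] omega_pow_mod)
  also have "\<dots> = (\<Prod>j\<in>totatives (5 ^ i). ev f (omega i ^ j))"
    using bij by (rule prod.reindex_bij_betw)
  finally show ?thesis by (simp add: ev_norm_poly)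
qed

(* The norm polynomial is invariant under omega -> omega^k, so its value N_i(f) at omega is an
   integer; modulo the prime above 5, i.e. at X = 1, it reduces to f(1)^phi. *)
lemma Nnorm_cong_poly_1:
  assumes i: "i \<ge> 1"
  obtains c where "Nnorm i f = of_int c" "[c = poly f 1 ^ totient (5 ^ i)] (mod 5)"
proof -
  define P where "P = norm_poly i f"
  have "trace_omega i P = of_nat (totient (5 ^ i)) * ev P (omega i)"
    using ev_norm_poly_omega_pow[OF i] by (simp add: trace_omega_def P_def totient_def)
  then have "ev P (omega i) \<in> \<int>"
    using trace_omega_Ints[OF i, of P] by (intro ev_omega_Ints_if_multiple[OF i]) simp_all
  then obtain c where c: "ev P (omega i) = of_int c" by (elim Ints_cases)
  have "5 dvd poly (P - [:c:]) 1" using c by (intro five_dvd_poly_1_if_root[OF i]) simp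
  moreover have "poly P 1 = poly f 1 ^ totient (5 ^ i)"
    by (simp add: P_def norm_poly_def poly_prod poly_pcompose poly_monom totient_def)
  moreover have "Nnorm i f = of_int c"
    using c by (simp add: Nnorm_eq_prod_totatives[OF i] P_def ev_norm_poly)
  ultimately show ?thesis using that by (simp add: cong_iff_dvd_diff dvd_diff_commute)
qed

lemma five_dvd_Nnorm_if_five_dvd_poly_1:
  assumes "i \<ge> 1" "5 dvd poly f 1"
  shows "\<exists>k::int. Nnorm i f = 5 * of_int k"
proof -
  obtain c where c: "Nnorm i f = of_int c" "[c = poly f 1 ^ totient (5 ^ i)] (mod 5)"
    using Nnorm_cong_poly_1[OF assms(1)] .
  moreover have "5 dvd poly f 1 ^ totient (5 ^ i)"
    using assms(2) by (intro dvd_trans[OF _ dvd_power]) simp_all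
  ultimately have "5 dvd c" by (simp add: cong_dvd_iff)
  then obtain k where "c = 5 * k" by (elim dvdE)
  with c(1) show ?thesis by (intro exI[of _ k]) simp
qed

section \<open>Units and normalisation modulo lambda^3\<close>

lemma Zomega_unit_iff:
  "Zomega_unit i u \<longleftrightarrow> (\<exists>U V. u = ev U (omega i) \<and> u * ev V (omega i) = 1)"
  unfolding Zomega_unit_def Zomega_def by blast

lemma Zomega_unit_1: "Zomega_unit i 1"
  unfolding Zomega_unit_iff by (intro exI[of _ 1]) simp

lemma Zomega_unit_mult:
  assumes "Zomega_unit i a" "Zomega_unit i b"
  shows "Zomega_unit i (a * b)"
proof -
  obtain A A' B B' where "a = ev A (omega i)" "a * ev A' (omega i) = 1"
    and "b = ev B (omega i)" "b * ev B' (omega i) = 1"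
    using assms unfolding Zomega_unit_iff by blast
  moreover have "a * b * (ev A' (omega i) * ev B' (omega i))
      = (a * ev A' (omega i)) * (b * ev B' (omega i))" by (simp only: ac_simps)
  ultimately show ?thesis
    unfolding Zomega_unit_iff by (intro exI[of _ "A * B"] exI[of _ "A' * B'"]) simp
qed

lemma Zomega_unit_power: "Zomega_unit i a \<Longrightarrow> Zomega_unit i (a ^ n)"
  by (induction n) (simp_all add: Zomega_unit_1 Zomega_unit_mult)

lemma Zomega_unit_sign: "s \<in> {1, -1} \<Longrightarrow> Zomega_unit i (of_int s)"
  unfolding Zomega_unit_iff by (intro exI[of _ "[:s:]"]) auto

lemma Zomega_unit_omega: "Zomega_unit i (omega i)"
proof -
  have "omega i * omega i ^ (5 ^ i - 1) = omega i ^ 5 ^ i"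
    by (simp flip: power_Suc)
  then show ?thesis
    unfolding Zomega_unit_iff by (intro exI[of _ "monom 1 1"] exI[of _ "monom 1 (5 ^ i - 1)"]) simp
qed

lemma one_plus_root_of_unity_inverse:
  fixes z :: "'a::field"
  assumes "odd N" "z ^ N = 1" "z \<noteq> 1"
  shows "(1 + z) * (\<Sum>l<(N + 1) div 2. z ^ (2 * l)) = 1"
proof -
  have even_sum: "(1 + z) * (\<Sum>l<M. z ^ (2 * l)) = (\<Sum>j<2 * M. z ^ j)" for M
    by (induction M) (simp_all add: algebra_simps)
  have "2 * ((N + 1) div 2) = Suc N" using assms(1) by simp
  moreover have "(\<Sum>j<N. z ^ j) = 0" using assms(2,3) by (simp add: geometric_sum)
  ultimately show ?thesis using assms(2) by (simp add: even_sum)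
qed

lemma Zomega_unit_one_plus_omega_pow:
  assumes "\<not> 5 ^ i dvd k"
  shows "Zomega_unit i (1 + omega i ^ k)"
proof -
  define V where "V = (\<Sum>l<(5 ^ i + 1) div 2. monom (1::int) (k * (2 * l)))"
  have "(1 + omega i ^ k) * (\<Sum>l<(5 ^ i + 1) div 2. (omega i ^ k) ^ (2 * l)) = 1"
  proof (rule one_plus_root_of_unity_inverse)
    show "(omega i ^ k) ^ 5 ^ i = 1"
      by (simp add: power_mult[symmetric] mult.commute[of k] power_mult)
    show "omega i ^ k \<noteq> 1" using assms by (simp add: omega_pow_eq_1_iff)
  qed simp
  moreover have "ev V (omega i) = (\<Sum>l<(5 ^ i + 1) div 2. (omega i ^ k) ^ (2 * l))"
    by (simp only: V_def ev_sum ev_monom of_int_1 mult_1_left power_mult)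
  ultimately have "(1 + omega i ^ k) * ev V (omega i) = 1" by simp
  then show ?thesis
    unfolding Zomega_unit_iff by (intro exI[of _ "1 + monom 1 k"] exI[of _ V]) simp
qed

lemma Zomega_unit_generators:
  assumes "i \<ge> 1"
  shows "Zomega_unit i (1 + omega i)" "Zomega_unit i (omega i ^ 4 + omega i)"
proof -
  have "(5::nat) \<le> 5 ^ i" using power_increasing[OF assms, of "5::nat"] by simp
  then have "\<not> 5 ^ i dvd (1::nat)" "\<not> 5 ^ i dvd (3::nat)" using assms by (auto dest: dvd_imp_le)
  then have "Zomega_unit i (1 + omega i ^ 1)" "Zomega_unit i (1 + omega i ^ 3)"
    using Zomega_unit_one_plus_omega_pow by blast+
  moreover have "omega i ^ 4 + omega i = omega i * (1 + omega i ^ 3)"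
    by (simp add: algebra_simps eval_nat_numeral)
  ultimately show "Zomega_unit i (1 + omega i)" "Zomega_unit i (omega i ^ 4 + omega i)"
    by (simp_all add: Zomega_unit_mult Zomega_unit_omega)
qed

(* 5 = (1 - z)(1 - z^2)(1 - z^3)(1 - z^4) for the primitive fifth root of unity
   z = omega^(5^(i-1)), and each factor is a multiple of 1 - omega. *)
lemma five_eq_lambda_cube:
  assumes i: "i \<ge> 1"
  obtains E where "5 = (omega i - 1) ^ 3 * ev E (omega i)"
proof -
  define m where "m = (5::nat) ^ (i - 1)"
  define w where "w = omega i"
  define z where "z = w ^ m"
  have "z ^ 5 = 1"
    unfolding z_def w_def m_def power_mult[symmetric] omega_pow_eq_1_iff
    using five_pow_eq[OF i] by (simp add: mult.commute)
  moreover have "z \<noteq> 1"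
    using omega_pow_mult_5pow_pred_neq_1[OF i, of 1] by (simp add: z_def w_def m_def)
  moreover have "(1 + z + z ^ 2 + z ^ 3 + z ^ 4) * (z - 1) = z ^ 5 - 1"
    by (simp add: algebra_simps eval_nat_numeral)
  ultimately have "1 + z + z ^ 2 + z ^ 3 + z ^ 4 = 0" by simp
  then have "(1 - z ^ 1) * (1 - z ^ 2) * (1 - z ^ 3) * (1 - z ^ 4) = 5"
    using \<open>z ^ 5 = 1\<close> by algebra
  moreover define P where "P j = (\<Sum>l<j * m. monom (1::int) l)" for j
  have e: "1 - z ^ j = (1 - w) * ev (P j) w" for j
    by (simp add: P_def z_def ev_sum one_diff_power_eq power_mult[symmetric] mult.commute)
  ultimately have "5 = ((1 - w) * ev (P 1) w) * ((1 - w) * ev (P 2) w) * ((1 - w) * ev (P 3) w)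
      * ((1 - w) * ev (P 4) w)"
    unfolding e by simp
  also have "\<dots> = (w - 1) ^ 3 * ((w - 1) * (ev (P 1) w * ev (P 2) w * ev (P 3) w * ev (P 4) w))"
    by algebra
  also have "\<dots> = (w - 1) ^ 3 * ev ([:-1, 1:] * (P 1 * P 2 * P 3 * P 4)) w"
    by (simp add: algebra_simps)
  finally show ?thesis unfolding w_def by (rule that)
qed

lemma ev_omega_eq_one_plus_lambda_cube:
  assumes i: "i \<ge> 1" and "cong5 3 Q 1"
  obtains h where "ev Q (omega i) = 1 + (omega i - 1) ^ 3 * ev h (omega i)"
proof -
  define w where "w = omega i"
  obtain E where E: "5 = (w - 1) ^ 3 * ev E w" using five_eq_lambda_cube[OF i] unfolding w_def .
  obtain C S where CS: "shift1 (Q - 1) = smult 5 C + monom 1 3 * S"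
    using assms(2) unfolding cong5_def by (elim low_coeffs_dvd_imp_decomp)
  have "pcompose (shift1 (Q - 1)) [:-1, 1:] = Q - 1"
    by (simp add: shift1_def pcompose_assoc[symmetric] pcompose_pCons)
  then have "ev Q w - 1 = ev (pcompose (shift1 (Q - 1)) [:-1, 1:]) w" by simp
  also have "\<dots> = ev (shift1 (Q - 1)) (w - 1)" by simp
  also have "\<dots> = 5 * ev C (w - 1) + (w - 1) ^ 3 * ev S (w - 1)"
    unfolding CS by simp
  also have "\<dots> = (w - 1) ^ 3 * ev (E * pcompose C [:-1, 1:] + pcompose S [:-1, 1:]) w"
    by (subst E) (simp add: algebra_simps)
  finally have "ev Q w = 1 + (w - 1) ^ 3 * ev (E * pcompose C [:-1, 1:] + pcompose S [:-1, 1:]) w"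
    by (simp add: diff_eq_eq)
  then show ?thesis unfolding w_def by (rule that)
qed

lemma low_coeffs_dvd_linear_power: "low_coeffs_dvd d 2 ([:1, 1:] ^ n - [:1, int n:])"
  using coeff_linear_power_1[of n] by (simp add: low_coeffs_dvd_def numeral_2_eq_2 less_Suc_eq coeff_0_power)

lemma low_coeffs_dvd_one_plus_square_power: "low_coeffs_dvd d 3 ([:1, 0, 1:] ^ n - [:1, 0, int n:])"
proof (induction n)
  case (Suc n)
  have "low_coeffs_dvd d 3 ([:1, 0, 1:] * ([:1, 0, 1:] ^ n - [:1, 0, int n:]))"
    using Suc by (rule low_coeffs_dvd_mult_left)
  moreover have "low_coeffs_dvd d 3 ([:1, 0, 1:] * [:1, 0, int n:] - [:1, 0, int (Suc n):])"
    by (simp add: low_coeffs_dvd_3_iff coeff_mult_1 coeff_mult_2 numeral_2_eq_2)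
  moreover have "[:1, 0, 1:] ^ Suc n - [:1, 0, int (Suc n):]
      = [:1, 0, 1:] * ([:1, 0, 1:] ^ n - [:1, 0, int n:])
        + ([:1, 0, 1:] * [:1, 0, int n:] - [:1, 0, int (Suc n):])"
    by (simp add: algebra_simps)
  ultimately show ?case by (simp only: low_coeffs_dvd_add)
qed (simp add: low_coeffs_dvd_def one_pCons)

lemma shift1_X4_plus_X: "shift1 (monom 1 4 + monom 1 1) = [:2, 5, 6, 4, 1:]"
  by (simp add: shift1_def monom_altdef eval_nat_numeral pcompose_pCons algebra_simps)

lemma low_coeffs_dvd_shift1_X4_plus_X_even_power:
  "low_coeffs_dvd 5 3 (smult ((-1) ^ K) (shift1 (monom 1 4 + monom 1 1) ^ (2 * K)) - [:1, 0, int K:])"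
proof -
  define W where "W = shift1 (monom 1 4 + monom 1 1) ^ 2"
  define c :: int where "c = (-1) ^ K"
  have "low_coeffs_dvd 5 3 (W - [:-1, 0, -1:])"
    unfolding W_def shift1_X4_plus_X
    by (simp add: low_coeffs_dvd_3_iff power2_eq_square coeff_mult_1 coeff_mult_2 numeral_2_eq_2)
  then have "low_coeffs_dvd 5 3 (W ^ K - [:-1, 0, -1:] ^ K)" by (rule low_coeffs_dvd_power_diff)
  moreover have "[:-1, 0, -1:] ^ K = smult c ([:1, 0, 1:] ^ K)"
    using smult_power[of "-1" "[:1, 0, 1::int:]" K] by (simp add: c_def)
  ultimately have "low_coeffs_dvd 5 3 (smult c (W ^ K - smult c ([:1, 0, 1:] ^ K)))"
    by (simp add: low_coeffs_dvd_smult)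
  moreover have "c * c = 1" by (simp add: c_def flip: power_mult_distrib)
  then have "smult c (W ^ K - smult c ([:1, 0, 1:] ^ K)) + ([:1, 0, 1:] ^ K - [:1, 0, int K:])
      = smult c (W ^ K) - [:1, 0, int K:]"
    by (simp add: smult_diff_right)
  ultimately show ?thesis
    using low_coeffs_dvd_add[OF _ low_coeffs_dvd_one_plus_square_power]
    by (metis W_def c_def power_mult)
qed

lemma exists_sign_pow2_inverse_mod5:
  fixes a :: int
  assumes "\<not> 5 dvd a"
  obtains s J where "s \<in> {1, -1}" "J \<in> {0, 1::nat}" "5 dvd s * 2 ^ J * a - 1"
proof -
  have "5 dvd a - 1 \<or> 5 dvd -2 * a - 1 \<or> 5 dvd 2 * a - 1 \<or> 5 dvd - a - 1"
    using assms by presburger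
  then show ?thesis
    using that[of 1 0] that[of "-1" 1] that[of 1 1] that[of "-1" 0] by auto
qed

(* With Y = X - 1, modulo (5, Y^3) the factors 1 + X, X and (X^4 + X)^2 are 2 + Y, 1 + Y and
   -(1 + Y^2); they fix the coefficients of Y^0, Y^1 and Y^2 of f in turn. *)
lemma exists_normalizing_unit:
  assumes "\<not> 5 dvd poly f 1"
  obtains s I J K where "s \<in> {1, -1}" "J \<in> {0, 1}" "I \<le> 4" "K \<le> 4"
    "cong5 3 ([:s:] * monom 1 I * [:1, 1:] ^ J * (monom 1 4 + monom 1 1) ^ (2 * K) * f) 1"
proof -
  obtain s0 J where s0: "s0 \<in> {1, -1}" and J: "J \<in> {0, 1}" and c0: "5 dvd s0 * 2 ^ J * poly f 1 - 1"
    using exists_sign_pow2_inverse_mod5[OF assms] .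
  define G1 where "G1 = [:s0:] * [:2, 1:] ^ J * shift1 f"
  have G1: "low_coeffs_dvd 5 1 (G1 - 1)"
    using c0 by (simp add: low_coeffs_dvd_def G1_def coeff_mult_0 coeff_0_power coeff_0_shift1 mult.assoc)
  define I where "I = nat ((- coeff G1 1) mod 5)"
  define G2 where "G2 = [:1, 1:] ^ I * G1"
  have "5 dvd coeff G1 1 + int I" by (simp add: I_def) presburger
  have G2: "low_coeffs_dvd 5 2 (G2 - 1)"
    unfolding G2_def numeral_2_eq_2
  proof (rule low_coeffs_dvd_mult_one_plus_monom[where t = "int I"])
    show "low_coeffs_dvd 5 (Suc (Suc 0)) ([:1, 1:] ^ I - (1 + monom (int I) (Suc 0)))"
      using low_coeffs_dvd_linear_power[of 5 I] by (simp add: numeral_2_eq_2 monom_Suc monom_0 one_pCons)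
  qed (use G1 \<open>5 dvd coeff G1 1 + int I\<close> in simp_all)
  define K where "K = nat ((- coeff G2 2) mod 5)"
  define G3 where "G3 = smult ((-1) ^ K) (shift1 (monom 1 4 + monom 1 1) ^ (2 * K)) * G2"
  have "5 dvd coeff G2 2 + int K" by (simp add: K_def) presburger
  have G3: "low_coeffs_dvd 5 3 (G3 - 1)"
    unfolding G3_def numeral_3_eq_3
  proof (rule low_coeffs_dvd_mult_one_plus_monom[where t = "int K"])
    show "low_coeffs_dvd 5 (Suc (Suc (Suc 0)))
        (smult ((-1) ^ K) (shift1 (monom 1 4 + monom 1 1) ^ (2 * K)) - (1 + monom (int K) (Suc (Suc 0))))"
      using low_coeffs_dvd_shift1_X4_plus_X_even_power[of K]
      by (simp add: numeral_3_eq_3 monom_Suc monom_0 one_pCons)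
  qed (use G2 \<open>5 dvd coeff G2 2 + int K\<close> in \<open>simp_all add: numeral_2_eq_2\<close>)
  define s where "s = s0 * (-1) ^ K"
  have "s \<in> {1, -1}" using s0 by (auto simp: s_def minus_one_power_iff)
  moreover have "I \<le> 4" "K \<le> 4" by (simp_all add: I_def K_def)
  moreover have "shift1 ([:s:] * monom 1 I * [:1, 1:] ^ J * (monom 1 4 + monom 1 1) ^ (2 * K) * f) = G3"
    by (simp add: G3_def G2_def G1_def s_def ac_simps flip: shift1_add)
  ultimately show ?thesis using J G3 that by (simp add: cong5_def)
qed

section \<open>Units congruent to 1 modulo lambda^3\<close>

(* If z^5 = omega^k, comparing the coefficients of X - 1 in Z^5 and X^k gives 5 | k, so z is
   itself a 5^i-th root of unity. *)
lemma root_of_unity_5pow_order: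
  assumes i: "i \<ge> 1"
  shows "ev Z (omega i) ^ (5 ^ e) = 1 \<Longrightarrow> ev Z (omega i) ^ (5 ^ i) = 1"
proof (induction e arbitrary: Z)
  case (Suc e)
  define z where "z = ev Z (omega i)"
  have "ev (Z ^ 5) (omega i) ^ (5 ^ e) = 1"
    using Suc.prems by (simp add: power_mult[symmetric] mult.commute)
  then have "ev (Z ^ 5) (omega i) ^ (5 ^ i) = 1" by (rule Suc.IH)
  then have "(z ^ 5) ^ (5 ^ i) = 1" by (simp add: z_def)
  then obtain k where k: "z ^ 5 = omega i ^ k" by (rule root_of_unity_eq_omega_pow)
  have "5 dvd k"
  proof -
    have "cong5 4 (Z ^ 5) (monom 1 k)" using k by (intro cong5_if_ev_eq[OF i]) (simp add: z_def)
    then have "5 dvd coeff (shift1 Z ^ 5) 1 - int k"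
      using cong5_coeffD[of 4 "Z ^ 5" "monom 1 k" 1] by (simp add: coeff_linear_power_1)
    moreover have "coeff (shift1 Z ^ 5) 1 = 5 * (coeff (shift1 Z) 0 ^ 4 * coeff (shift1 Z) 1)"
      using coeff_power_1[of "shift1 Z" 4] by simp
    ultimately have "5 dvd int k" using dvd_diff[of 5 "coeff (shift1 Z ^ 5) 1"] by fastforce
    then show ?thesis by presburger
  qed
  then obtain l where "k = 5 * l" by (elim dvdE)
  have "z ^ (5 ^ i) = (z ^ 5) ^ (5 ^ (i - 1))"
    using i by (simp add: five_pow_eq power_mult)
  also have "\<dots> = (omega i ^ 5 ^ i) ^ l"
    using i by (simp add: k \<open>k = 5 * l\<close> five_pow_eq power_mult[symmetric] ac_simps)
  finally show ?case by (simp add: z_def)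
qed simp

lemma cong5_monom_imp_five_dvd:
  assumes "cong5 4 (monom 1 k) (1 + [:-1, 1:] ^ 3 * [:b:])"
  shows "5 dvd b"
proof -
  have "5 dvd coeff (shift1 (monom 1 k)) 1 - coeff (shift1 (1 + [:-1, 1:] ^ 3 * [:b:])) 1"
    using assms by (rule cong5_coeffD) simp
  then have "5 dvd int k"
    by (simp only: shift1_add shift1_1 shift1_X_minus_1_power_mult)
      (simp add: coeff_linear_power_1 coeff_monom_mult)
  then have "5 dvd k" by presburger
  then obtain l where "k = 5 * l" by (elim dvdE)
  then have "cong5 4 1 (monom 1 k)"
    using cong5_sym[OF cong5_power[OF cong5_monom_5pow[of 1], of l]]
    by (simp add: monom_mult_power mult.commute)
  with assms have "cong5 4 (1 + [:-1, 1:] ^ 3 * 0) (1 + [:-1, 1:] ^ 3 * [:b:])"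
    by (simp add: cong5_trans)
  then show ?thesis using cong5_X_minus_1_cube_mult_coeff by fastforce
qed

lemma root_of_unity_cong5_imp_five_dvd:
  assumes i: "i \<ge> 1" and "M > 0" "ev Z (omega i) ^ M = 1"
    and Z: "cong5 4 Z (1 + [:-1, 1:] ^ 3 * [:a:])"
  shows "5 dvd a"
proof -
  define e where "e = multiplicity 5 M"
  define M' where "M' = M div 5 ^ e"
  have M: "M = 5 ^ e * M'" by (simp add: M'_def e_def multiplicity_dvd)
  have M': "\<not> 5 dvd M'"
    using multiplicity_decompose[of M 5] \<open>M > 0\<close> by (simp add: M'_def e_def)
  have "ev (Z ^ M') (omega i) ^ (5 ^ e) = 1"
    using assms(3) by (simp add: M power_mult[symmetric] mult.commute)
  then have "ev (Z ^ M') (omega i) ^ (5 ^ i) = 1" by (rule root_of_unity_5pow_order[OF i])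
  then obtain k where "ev (Z ^ M') (omega i) = omega i ^ k" by (rule root_of_unity_eq_omega_pow)
  then have "cong5 4 (monom 1 k) (Z ^ M')" by (intro cong5_if_ev_eq[OF i]) simp
  moreover have "cong5 4 (Z ^ M') ((1 + [:-1, 1:] ^ 3 * [:a:]) ^ M')"
    using Z by (rule cong5_power)
  moreover have "cong5 4 ((1 + [:-1, 1:] ^ 3 * [:a:]) ^ M') (1 + [:-1, 1:] ^ 3 * [:int M' * a:])"
    using cong5_one_plus_power[OF cong5_X_minus_1_cube_square[of "[:a:]" "[:a:]"], of M']
    by (simp add: ac_simps)
  ultimately have "5 dvd int M' * a" by (blast intro: cong5_trans cong5_monom_imp_five_dvd)
  moreover have "\<not> 5 dvd int M'" using M' by presburger
  ultimately show ?thesis by (simp add: prime_dvd_mult_iff)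
qed

(* Kronecker's argument: the traces of W^a X^r are integers bounded by the number of conjugates,
   so two powers of W have the same traces, and hence are equal. *)
lemma kronecker_omega:
  assumes i: "i \<ge> 1" and W: "\<And>k. k \<in> totatives (5 ^ i) \<Longrightarrow> norm (ev W (omega i ^ k)) = 1"
  obtains M where "M > 0" "ev W (omega i) ^ M = 1"
proof -
  define B where "B = int (totient (5 ^ i))"
  define S where "S = (of_int ` {-B..B} :: complex set)"
  define vec where "vec a = (\<lambda>r\<in>{..<5 ^ i}. trace_omega i (W ^ a * monom 1 r))" for a
  have "trace_omega i (W ^ a * monom 1 r) \<in> S" for a r
  proof -
    obtain c where c: "trace_omega i (W ^ a * monom 1 r) = of_int c"
      using trace_omega_Ints[OF i, of "W ^ a * monom 1 r"] by (elim Ints_cases)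
    have "norm (trace_omega i (W ^ a * monom 1 r)) \<le> totient (5 ^ i)"
      using W by (intro norm_trace_omega_le) (simp add: norm_mult norm_power)
    then have "\<bar>c\<bar> \<le> B" using c by (simp add: B_def)
    then show ?thesis unfolding S_def c by (intro imageI) (simp add: abs_le_iff)
  qed
  then have "vec a \<in> PiE {..<5 ^ i} (\<lambda>_. S)" for a
    unfolding vec_def by (simp add: restrict_PiE_iff)
  then have "range vec \<subseteq> PiE {..<5 ^ i} (\<lambda>_. S)" by blast
  moreover have "finite (PiE {..<(5::nat) ^ i} (\<lambda>_. S))" by (simp add: S_def finite_PiE)
  ultimately have "\<not> inj vec" using finite_subset finite_imageD by (metis infinite_UNIV_nat)
  then obtain a b where "a < b" "vec a = vec b"
    unfolding inj_def by (metis linorder_neqE_nat)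
  then have vab: "vec a r = vec b r" for r by simp
  have "trace_omega i ((W ^ b - W ^ a) * monom 1 r) = 0" if "r < 5 ^ i" for r
    using vab[of r] that by (simp add: vec_def left_diff_distrib trace_omega_diff)
  then have "ev (W ^ b - W ^ a) (omega i) = 0" by (rule ev_omega_eq_0_if_traces_eq_0[OF i])
  moreover have "ev W (omega i) \<noteq> 0" using W[of 1] i by (auto simp: Suc_le_eq)
  ultimately have "ev W (omega i) ^ (b - a) = 1"
    using \<open>a < b\<close> by (simp add: power_diff)
  with \<open>a < b\<close> show ?thesis by (intro that[of "b - a"]) simp_all
qed

(* At the conjugates of omega, X^(5^i - 1) is the complex conjugate of X; modulo (5, (X - 1)^4)
   it is the inverse 1 - Y + Y^2 - Y^3 of X = 1 + Y. *)
lemma cong5_monom_pred_cube: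
  assumes i: "i \<ge> 1"
  shows "cong5 4 ((monom 1 (5 ^ i - 1) - 1) ^ 3) (- ([:-1, 1:] ^ 3))"
proof -
  define X where "X = [:-1, 1::int:]"
  define Y where "Y = 1 - X + X ^ 2 - X ^ 3"
  define G where "G = monom (1::int) (5 ^ i - 1)"
  have "cong5 4 (monom 1 1 * Y) 1"
  proof -
    have "monom 1 1 * Y = 1 - X ^ 4 * 1"
      by (simp add: Y_def X_def monom_altdef one_pCons algebra_simps eval_nat_numeral)
    moreover have "cong5 4 (1 - X ^ 4 * 1) (1 - 0)"
      unfolding X_def by (intro cong5_diff cong5_X_minus_1_power_mult) simp
    ultimately show ?thesis by simp
  qed
  have "cong5 4 (G * 1) (G * (monom 1 1 * Y))"
    using cong5_sym[OF \<open>cong5 4 (monom 1 1 * Y) 1\<close>] by (intro cong5_mult) simp_all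
  then have "cong5 4 G (G * (monom 1 1 * Y))" by simp
  also have "G * (monom 1 1 * Y) = monom 1 (5 ^ i) * Y"
    using i by (simp add: G_def mult.assoc[symmetric] mult_monom)
  also have "cong5 4 \<dots> (1 * Y)" using cong5_monom_5pow[OF i] by (intro cong5_mult) simp_all
  finally have "cong5 4 ((G - 1) ^ 3) ((Y - 1) ^ 3)" by (intro cong5_power cong5_diff) simp_all
  also have "(Y - 1) ^ 3 = - (X ^ 3) - X ^ 4 * ((X - 1) * (3 + 3 * (X ^ 2 - X) + (X ^ 2 - X) ^ 2))"
    by (simp add: Y_def algebra_simps eval_nat_numeral)
  also have "cong5 4 \<dots> (- (X ^ 3) - 0)"
    unfolding X_def by (intro cong5_diff cong5_X_minus_1_power_mult) simp
  finally show ?thesis by (simp add: G_def X_def)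
qed

lemma norm_ev_unit_mult_conj_inverse:
  assumes i: "i \<ge> 1" and UV: "ev U (omega i) * ev V (omega i) = 1"
    and k: "k \<in> totatives (5 ^ i)"
  shows "norm (ev (U * pcompose V (monom 1 (5 ^ i - 1))) (omega i ^ k)) = 1"
proof -
  define z where "z = omega i ^ k"
  have "ev (U * V - 1) (omega i ^ k) = 0"
    using UV not_five_dvd_if_in_totatives[OF i k] by (intro ev_omega_pow_eq_0_if_root[OF i]) simp_all
  then have "ev U z * ev V z = 1" by (simp add: z_def)
  have "cnj z = omega i ^ ((5 ^ i - 1) * k)" by (simp only: z_def cnj_omega_pow)
  then have "ev (monom 1 (5 ^ i - 1)) z = cnj z"
    by (simp add: z_def power_mult[symmetric] mult.commute)
  then have "ev (U * pcompose V (monom 1 (5 ^ i - 1))) z = ev U z * cnj (ev V z)"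
    by (simp add: ev_cnj)
  then show ?thesis
    using \<open>ev U z * ev V z = 1\<close> by (metis z_def complex_mod_cnj norm_mult norm_one)
qed

lemma cong5_4_if_cong5_3:
  assumes "cong5 3 U 1"
  shows "cong5 4 U (1 + [:-1, 1:] ^ 3 * [:coeff (shift1 U) 3:])"
proof -
  define c where "c = coeff (shift1 U) 3"
  have eq: "shift1 (U - (1 + [:-1, 1:] ^ 3 * [:c:])) = shift1 (U - 1) - monom c 3"
    by (simp add: monom_altdef)
  have "5 dvd coeff (shift1 (U - (1 + [:-1, 1:] ^ 3 * [:c:]))) j" if "j < 4" for j
  proof (cases "j = 3")
    case False
    with that have "j < 3" by simp
    with assms show ?thesis unfolding eq by (simp add: cong5_def low_coeffs_dvd_def coeff_monom)
  qed (unfold eq, simp add: c_def)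
  then show ?thesis by (simp add: cong5_def low_coeffs_dvd_def c_def)
qed

lemma cong5_pcompose_monom_pred:
  assumes i: "i \<ge> 1" and V: "cong5 4 V (1 - [:-1, 1:] ^ 3 * [:c:])"
  shows "cong5 4 (pcompose V (monom 1 (5 ^ i - 1))) (1 + [:-1, 1:] ^ 3 * [:c:])"
proof -
  define G where "G = monom (1::int) (5 ^ i - 1)"
  have "pcompose [:-1, 1:] G = G - 1" by (simp add: pcompose_pCons one_pCons)
  then have "pcompose (1 - [:-1, 1:] ^ 3 * [:c:]) G = 1 - (G - 1) ^ 3 * [:c:]"
    by (simp add: pcompose_diff pcompose_1 pcompose_mult pcompose_smult pcompose_power_left)
  moreover have "cong5 4 (pcompose V G) (pcompose (1 - [:-1, 1:] ^ 3 * [:c:]) G)"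
    using V by (rule cong5_pcompose) (simp add: G_def poly_monom)
  ultimately have "cong5 4 (pcompose V G) (1 - (G - 1) ^ 3 * [:c:])" by simp
  also have "cong5 4 \<dots> (1 - (- ([:-1, 1:] ^ 3)) * [:c:])"
    using cong5_monom_pred_cube[OF i] by (intro cong5_diff cong5_mult) (simp_all add: G_def)
  finally show ?thesis by (simp add: G_def)
qed

lemma cong5_X_minus_1_cube_const_iff: "cong5 4 ([:-1, 1:] ^ 3 * [:c:]) 0 \<longleftrightarrow> 5 dvd c"
  unfolding cong5_def diff_zero shift1_X_minus_1_power_mult
  by (simp add: low_coeffs_dvd_def coeff_monom_mult eval_nat_numeral less_Suc_eq)

(* If U = 1 + c lambda^3 mod lambda^4, then W = U / conj U = 1 + 2 c lambda^3 has all its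
   conjugates on the unit circle, so it is a root of unity, and this forces 5 | c. *)
lemma unit_cong5_3_imp_cong5_4:
  assumes i: "i \<ge> 1" and UV: "ev U (omega i) * ev V (omega i) = 1" and U: "cong5 3 U 1"
  shows "cong5 4 U 1"
proof -
  define c where "c = coeff (shift1 U) 3"
  define E where "E = [:-1, 1:] ^ 3 * [:c:]"
  define W where "W = U * pcompose V (monom 1 (5 ^ i - 1))"
  have EE: "cong5 4 (E * E) 0" unfolding E_def by (rule cong5_X_minus_1_cube_square)
  have cgU: "cong5 4 U (1 + E)" unfolding E_def c_def using U by (rule cong5_4_if_cong5_3)
  have "cong5 4 V (1 - E)"
    using UV by (intro cong5_unit_inverse[OF _ cgU EE] cong5_if_ev_eq[OF i]) simp
  then have "cong5 4 (pcompose V (monom 1 (5 ^ i - 1))) (1 + E)"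
    unfolding E_def by (rule cong5_pcompose_monom_pred[OF i])
  with cgU have "cong5 4 W ((1 + E) ^ 2)" unfolding W_def power2_eq_square by (rule cong5_mult)
  also have "cong5 4 \<dots> (1 + [:-1, 1:] ^ 3 * [:2 * c:])"
    using cong5_one_plus_power[OF EE, of 2] by (simp add: E_def)
  finally have "cong5 4 W (1 + [:-1, 1:] ^ 3 * [:2 * c:])" .
  moreover obtain M where "M > 0" "ev W (omega i) ^ M = 1"
    using kronecker_omega[OF i norm_ev_unit_mult_conj_inverse[OF i UV]] unfolding W_def by blast
  ultimately have "5 dvd 2 * c" using root_of_unity_cong5_imp_five_dvd[OF i] by blast
  then have "cong5 4 E 0" unfolding E_def cong5_X_minus_1_cube_const_iff by presburger
  then have "cong5 4 (1 + E) (1 + 0)" by (intro cong5_add) simp_all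
  from cong5_trans[OF cgU this] show ?thesis by simp
qed

lemma poly_1_cong_if_unit_multiples:
  assumes i: "i \<ge> 1" and u1: "Zomega_unit i u1" and u2: "Zomega_unit i u2"
    and e1: "u1 * ev f (omega i) = 1 + (omega i - 1) ^ 3 * ev h1 (omega i)"
    and e2: "u2 * ev f (omega i) = 1 + (omega i - 1) ^ 3 * ev h2 (omega i)"
  shows "[poly h1 1 = poly h2 1] (mod 5)"
proof -
  define w where "w = omega i"
  define X where "X = [:-1, 1::int:]"
  obtain U1 V1 where U1: "u1 = ev U1 w" "u1 * ev V1 w = 1"
    using u1 unfolding Zomega_unit_iff w_def by blast
  obtain U2 V2 where U2: "u2 = ev U2 w" "u2 * ev V2 w = 1"
    using u2 unfolding Zomega_unit_iff w_def by blast
  define U where "U = U2 * V1"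
  have "ev U w * ev (U1 * V2) w = (u1 * ev V1 w) * (u2 * ev V2 w)"
    by (simp add: U_def U1(1) U2(1) ac_simps)
  then have UV: "ev U w * ev (U1 * V2) w = 1" using U1(2) U2(2) by simp
  have "ev U w * ev (1 + X ^ 3 * h1) w = (u1 * ev V1 w) * (u2 * ev f w)"
    using e1 by (simp add: U_def U2(1) X_def w_def ac_simps)
  also have "\<dots> = ev (1 + X ^ 3 * h2) w"
    using e2 U1(2) by (simp add: X_def w_def)
  finally have "cong5 4 (U * (1 + X ^ 3 * h1)) (1 + X ^ 3 * h2)"
    by (intro cong5_if_ev_eq[OF i]) (simp add: w_def)
  then have "cong5 3 (U * (1 + X ^ 3 * h1)) (1 + X ^ 3 * h2)" by (rule cong5_mono) simp
  then have "cong5 3 (U * (1 + X ^ 3 * h1)) 1"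
    using cong5_3_one_plus_X_minus_1_cube_mult[of h2] by (simp add: X_def cong5_trans)
  moreover have "cong5 3 (U * 1) (U * (1 + X ^ 3 * h1))"
    using cong5_sym[OF cong5_3_one_plus_X_minus_1_cube_mult[of h1]]
    by (intro cong5_mult) (simp_all add: X_def)
  ultimately have "cong5 3 U 1" by (simp add: cong5_trans)
  with UV have "cong5 4 U 1" unfolding w_def by (rule unit_cong5_3_imp_cong5_4[OF i])
  then have "cong5 4 (1 * (1 + X ^ 3 * h1)) (U * (1 + X ^ 3 * h1))"
    by (intro cong5_mult cong5_sym[OF \<open>cong5 4 U 1\<close>]) simp
  with \<open>cong5 4 (U * (1 + X ^ 3 * h1)) (1 + X ^ 3 * h2)\<close>
  have "cong5 4 (1 + X ^ 3 * h1) (1 + X ^ 3 * h2)" by (simp add: cong5_trans)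
  then show ?thesis unfolding X_def cong_iff_dvd_diff by (rule cong5_X_minus_1_cube_mult_coeff)
qed

theorem lemma3p1:
  fixes i :: nat and f :: "int poly"
  assumes "i \<ge> 1"
    and "\<not> (\<exists>k::int. Nnorm i f = 5 * of_int k)"
  shows "(\<exists>u h. Zomega_unit i u \<and>
            u * ev f (omega i) = 1 + (omega i - 1) ^ 3 * ev h (omega i))
       \<and> (\<exists>(s::int) (I::nat) (J::nat) (K::nat) h.
            s \<in> {1, -1} \<and> J \<in> {0, 1} \<and> I \<le> 4 \<and> K \<le> 4 \<and>
            of_int s * omega i ^ I * (1 + omega i) ^ J * (omega i ^ 4 + omega i) ^ (2 * K)
              * ev f (omega i) = 1 + (omega i - 1) ^ 3 * ev h (omega i))
       \<and> \<not> (\<exists>u1 u2 h1 h2. Zomega_unit i u1 \<and> Zomega_unit i u2 \<and>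
            u1 * ev f (omega i) = 1 + (omega i - 1) ^ 3 * ev h1 (omega i) \<and>
            u2 * ev f (omega i) = 1 + (omega i - 1) ^ 3 * ev h2 (omega i) \<and>
            (5::int) dvd poly h1 1 \<and> \<not> (5::int) dvd poly h2 1)"
proof -
  have f: "\<not> 5 dvd poly f 1"
    using five_dvd_Nnorm_if_five_dvd_poly_1[OF assms(1)] assms(2) by blast
  obtain s I J K where sIJK: "s \<in> {1, -1}" "J \<in> {0, 1}" "I \<le> 4" "K \<le> 4"
    and normal: "cong5 3 ([:s:] * monom 1 I * [:1, 1:] ^ J * (monom 1 4 + monom 1 1) ^ (2 * K) * f) 1"
    using f by (rule exists_normalizing_unit)
  obtain h where "ev ([:s:] * monom 1 I * [:1, 1:] ^ J * (monom 1 4 + monom 1 1) ^ (2 * K) * f)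
      (omega i) = 1 + (omega i - 1) ^ 3 * ev h (omega i)"
    using normal by (rule ev_omega_eq_one_plus_lambda_cube[OF assms(1)])
  then have "of_int s * omega i ^ I * (1 + omega i) ^ J * (omega i ^ 4 + omega i) ^ (2 * K)
      * ev f (omega i) = 1 + (omega i - 1) ^ 3 * ev h (omega i)"
    by (simp add: ac_simps)
  moreover have "Zomega_unit i (of_int s * omega i ^ I * (1 + omega i) ^ J * (omega i ^ 4 + omega i) ^ (2 * K))"
    using sIJK Zomega_unit_generators[OF assms(1)]
    by (intro Zomega_unit_mult Zomega_unit_power Zomega_unit_sign Zomega_unit_omega)
  moreover note cong_dvd_iff[OF poly_1_cong_if_unit_multiples[OF assms(1)]]
  ultimately show ?thesis using sIJK by blast
qed

end
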